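(* Let $p$ be a prime and $X$ a countable set. Every $\tau$-continuous $\mathbb{Z}_p$-linear map $A:\mathbb{Q}_p(X)\to\mathbb{Q}_p(X)$ is continuous with respect to the norm $\|\cdot\|$ on $\mathbb{Q}_p(X)$.
   Context: $\mathbb{Q}_p(X)$ is the set of maps $\xi:X\to\mathbb{Q}_p$ with $|\xi(i)|_p\le1$ for all but finitely many $i$, a $\mathbb{Z}_p$-module under coordinatewise operations, with the topology $\tau$ in which $A\subseteq\mathbb{Q}_p(X)$ is open iff for every finite $P\subseteq X$ the set $A\cap\big(\prod_{i\in P}\mathbb{Q}_p\times\prod_{j\in X\setminus P}\mathbb{Z}_p\big)$ is open in the product topology. The norm is $\|\xi\|=\max_{i\in X}|\xi(i)|_p$. *)

theory Defs
  imports "HOL-Analysis.Analysis" "HOL-Computational_Algebra.Computational_Algebra"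
begin

definition pval_rat :: "nat \<Rightarrow> rat \<Rightarrow> int" where
  "pval_rat p q = (case quotient_of q of (a, b) \<Rightarrow>
      int (multiplicity (int p) a) - int (multiplicity (int p) b))"

definition pabs_rat :: "nat \<Rightarrow> rat \<Rightarrow> real" where
  "pabs_rat p q = (if q = 0 then 0 else real p powr (- real_of_int (pval_rat p q)))"

definition padic_cauchy :: "nat \<Rightarrow> (nat \<Rightarrow> rat) \<Rightarrow> bool" where
  "padic_cauchy p f \<longleftrightarrow>
     (\<forall>e>0. \<exists>N. \<forall>m\<ge>N. \<forall>n\<ge>N. pabs_rat p (f m - f n) < e)"

definition padic_equiv :: "nat \<Rightarrow> (nat \<Rightarrow> rat) \<Rightarrow> (nat \<Rightarrow> rat) \<Rightarrow> bool" where
  "padic_equiv p f g \<longleftrightarrow> (\<lambda>n. pabs_rat p (f n - g n)) \<longlonglongrightarrow> 0"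

type_synonym qp = "(nat \<Rightarrow> rat) set"

definition qp_cls :: "nat \<Rightarrow> (nat \<Rightarrow> rat) \<Rightarrow> qp" where
  "qp_cls p f = {g. padic_cauchy p g \<and> padic_equiv p f g}"

definition Qp :: "nat \<Rightarrow> qp set" where
  "Qp p = {qp_cls p f | f. padic_cauchy p f}"

definition qp_rep :: "qp \<Rightarrow> (nat \<Rightarrow> rat)" where
  "qp_rep x = (SOME f. f \<in> x)"

definition qp_add :: "nat \<Rightarrow> qp \<Rightarrow> qp \<Rightarrow> qp" where
  "qp_add p x y = qp_cls p (\<lambda>n. qp_rep x n + qp_rep y n)"

definition qp_mult :: "nat \<Rightarrow> qp \<Rightarrow> qp \<Rightarrow> qp" where
  "qp_mult p x y = qp_cls p (\<lambda>n. qp_rep x n * qp_rep y n)"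

definition qp_minus :: "nat \<Rightarrow> qp \<Rightarrow> qp \<Rightarrow> qp" where
  "qp_minus p x y = qp_cls p (\<lambda>n. qp_rep x n - qp_rep y n)"

definition qp_abs :: "nat \<Rightarrow> qp \<Rightarrow> real" where
  "qp_abs p x = lim (\<lambda>n. pabs_rat p (qp_rep x n))"

definition Zp :: "nat \<Rightarrow> qp set" where
  "Zp p = {x \<in> Qp p. qp_abs p x \<le> 1}"

definition qp_open :: "nat \<Rightarrow> qp set \<Rightarrow> bool" where
  "qp_open p U \<longleftrightarrow> U \<subseteq> Qp p \<and>
     (\<forall>x\<in>U. \<exists>e>0. \<forall>y\<in>Qp p. qp_abs p (qp_minus p y x) < e \<longrightarrow> y \<in> U)"

definition qp_topology :: "nat \<Rightarrow> qp topology" where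
  "qp_topology p = topology (qp_open p)"

definition QpX :: "nat \<Rightarrow> ('x \<Rightarrow> qp) set" where
  "QpX p = {\<xi>. (\<forall>i. \<xi> i \<in> Qp p) \<and> finite {i. qp_abs p (\<xi> i) > 1}}"

definition qpX_add :: "nat \<Rightarrow> ('x \<Rightarrow> qp) \<Rightarrow> ('x \<Rightarrow> qp) \<Rightarrow> ('x \<Rightarrow> qp)" where
  "qpX_add p \<xi> \<eta> = (\<lambda>i. qp_add p (\<xi> i) (\<eta> i))"

definition qpX_smult :: "nat \<Rightarrow> qp \<Rightarrow> ('x \<Rightarrow> qp) \<Rightarrow> ('x \<Rightarrow> qp)" where
  "qpX_smult p c \<xi> = (\<lambda>i. qp_mult p c (\<xi> i))"

definition qpX_minus :: "nat \<Rightarrow> ('x \<Rightarrow> qp) \<Rightarrow> ('x \<Rightarrow> qp) \<Rightarrow> ('x \<Rightarrow> qp)" where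
  "qpX_minus p \<xi> \<eta> = (\<lambda>i. qp_minus p (\<xi> i) (\<eta> i))"

text \<open>The norm: max over i of |xi(i)|_p (the supremum is attained).\<close>
definition qpX_norm :: "nat \<Rightarrow> ('x \<Rightarrow> qp) \<Rightarrow> real" where
  "qpX_norm p \<xi> = Sup (range (\<lambda>i. qp_abs p (\<xi> i)))"

definition tau_open :: "nat \<Rightarrow> ('x \<Rightarrow> qp) set \<Rightarrow> bool" where
  "tau_open p A \<longleftrightarrow> A \<subseteq> QpX p \<and>
     (\<forall>P. finite P \<longrightarrow>
        openin (product_topology
                  (\<lambda>i. if i \<in> P then qp_topology p else subtopology (qp_topology p) (Zp p)) UNIV)
               (A \<inter> {\<xi>. \<forall>j. j \<notin> P \<longrightarrow> \<xi> j \<in> Zp p}))"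

definition tau_continuous :: "nat \<Rightarrow> (('x \<Rightarrow> qp) \<Rightarrow> ('x \<Rightarrow> qp)) \<Rightarrow> bool" where
  "tau_continuous p A \<longleftrightarrow> (\<forall>\<xi>\<in>QpX p. A \<xi> \<in> QpX p) \<and>
     (\<forall>U. tau_open p U \<longrightarrow> tau_open p {\<xi> \<in> QpX p. A \<xi> \<in> U})"

definition Zp_linear :: "nat \<Rightarrow> (('x \<Rightarrow> qp) \<Rightarrow> ('x \<Rightarrow> qp)) \<Rightarrow> bool" where
  "Zp_linear p A \<longleftrightarrow> (\<forall>\<xi>\<in>QpX p. A \<xi> \<in> QpX p) \<and>
     (\<forall>\<xi>\<in>QpX p. \<forall>\<eta>\<in>QpX p. A (qpX_add p \<xi> \<eta>) = qpX_add p (A \<xi>) (A \<eta>)) \<and>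
     (\<forall>c\<in>Zp p. \<forall>\<xi>\<in>QpX p. A (qpX_smult p c \<xi>) = qpX_smult p c (A \<xi>))"

definition norm_continuous :: "nat \<Rightarrow> (('x \<Rightarrow> qp) \<Rightarrow> ('x \<Rightarrow> qp)) \<Rightarrow> bool" where
  "norm_continuous p A \<longleftrightarrow> (\<forall>\<xi>\<in>QpX p. \<forall>e>0. \<exists>d>0. \<forall>\<eta>\<in>QpX p.
      qpX_norm p (qpX_minus p \<eta> \<xi>) < d \<longrightarrow> qpX_norm p (qpX_minus p (A \<eta>) (A \<xi>)) < e)"

end

theory Submission
  imports Defs
begin

text \<open>
  The preimage under A of the unit ball Z_p(X) is \<tau>-open and contains 0 (as A 0 = 0). Its trace
  on Z_p(X) is open in the product topology of copies of Z_p, and a basic neighbourhood of 0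
  there constrains only finitely many coordinates; so there is a \<delta> > 0 with
  \<parallel>\<zeta>\<parallel> < \<delta> \<Longrightarrow> \<parallel>A \<zeta>\<parallel> \<le> 1. Since p^n \<in> Z_p, Z_p-linearity rescales this to
  \<parallel>\<zeta>\<parallel> < \<delta> p^-n \<Longrightarrow> \<parallel>A \<zeta>\<parallel> \<le> p^-n, and additivity turns this bound at 0 into continuity
  at every point.
\<close>

section \<open>The p-adic absolute value on the rationals\<close>

lemma pval_rat_of_int_divide:
  assumes "prime p" "r \<noteq> 0" "s \<noteq> 0"
  shows "pval_rat p (of_int r / of_int s) =
           int (multiplicity (int p) r) - int (multiplicity (int p) s)"
proof -
  obtain a b where ab: "quotient_of (of_int r / of_int s) = (a, b)"
    by (cases "quotient_of (of_int r / of_int s)") auto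
  have b: "b > 0" using quotient_of_denom_pos[OF ab] .
  have eq: "(of_int r / of_int s :: rat) = of_int a / of_int b" using quotient_of_div[OF ab] .
  then have a: "a \<noteq> 0" using assms b by auto
  have "of_int (a * s) = (of_int (r * b) :: rat)"
    using eq assms b by (simp add: field_simps)
  then have "multiplicity (int p) (a * s) = multiplicity (int p) (r * b)"
    by (simp only: of_int_eq_iff)
  moreover have "prime_elem (int p)" using assms(1) by auto
  ultimately have "multiplicity (int p) a + multiplicity (int p) s =
                   multiplicity (int p) r + multiplicity (int p) b"
    using prime_elem_multiplicity_mult_distrib a b assms by (metis less_irrefl)
  then show ?thesis unfolding pval_rat_def ab by simp
qed

lemma rat_nonzero_cases:
  fixes q :: rat
  assumes "q \<noteq> 0"
  obtains r s where "r \<noteq> 0" "s \<noteq> 0" "q = of_int r / of_int s"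
proof -
  obtain a b where ab: "quotient_of q = (a, b)" by (cases "quotient_of q") auto
  then show ?thesis
    using that[of a b] assms quotient_of_denom_pos[OF ab] quotient_of_div[OF ab] by auto
qed

lemma pabs_rat_nonneg: "pabs_rat p q \<ge> 0"
  unfolding pabs_rat_def by auto

lemma pabs_rat_0 [simp]: "pabs_rat p 0 = 0"
  unfolding pabs_rat_def by auto

lemma pabs_rat_mult:
  assumes "prime p"
  shows "pabs_rat p (x * y) = pabs_rat p x * pabs_rat p y"
proof (cases "x = 0 \<or> y = 0")
  case False
  then obtain r s r' s' where rs: "r \<noteq> 0" "s \<noteq> 0" "x = of_int r / of_int s"
    and rs': "r' \<noteq> 0" "s' \<noteq> 0" "y = of_int r' / of_int s'"
    by (metis rat_nonzero_cases)
  have pe: "prime_elem (int p)" using assms by auto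
  have xy: "x * y = of_int (r * r') / of_int (s * s')" using rs rs' by simp
  have "pval_rat p (x * y) = int (multiplicity (int p) (r * r')) - int (multiplicity (int p) (s * s'))"
    unfolding xy by (rule pval_rat_of_int_divide[OF assms]) (use rs rs' in simp_all)
  also have "\<dots> = pval_rat p x + pval_rat p y"
    using pval_rat_of_int_divide[OF assms] rs rs' prime_elem_multiplicity_mult_distrib[OF pe] by simp
  finally have "pval_rat p (x * y) = pval_rat p x + pval_rat p y" .
  with False show ?thesis
    unfolding pabs_rat_def by (simp add: powr_add[symmetric] algebra_simps)
qed auto

lemma pabs_rat_minus:
  assumes "prime p"
  shows "pabs_rat p (- x) = pabs_rat p x"
proof (cases "x = 0")
  case False
  then obtain r s where rs: "r \<noteq> 0" "s \<noteq> 0" "x = of_int r / of_int s"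
    by (metis rat_nonzero_cases)
  then have "- x = of_int (- r) / of_int s" by simp
  then have "pval_rat p (- x) = pval_rat p x"
    using rs pval_rat_of_int_divide[OF assms, of "- r" s] pval_rat_of_int_divide[OF assms, of r s]
    by simp
  then show ?thesis unfolding pabs_rat_def by simp
qed simp

lemma multiplicity_add_ge_min:
  fixes q x y :: "'a :: factorial_semiring"
  assumes "\<not> is_unit q" "x + y \<noteq> 0"
  shows "min (multiplicity q x) (multiplicity q y) \<le> multiplicity q (x + y)"
proof -
  let ?k = "min (multiplicity q x) (multiplicity q y)"
  have "q ^ ?k dvd x" "q ^ ?k dvd y" by (simp_all add: multiplicity_dvd')
  then have "q ^ ?k dvd x + y" by simp
  then show ?thesis using assms multiplicity_geI by blast
qed

lemma pabs_rat_add_le_max: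
  assumes "prime p"
  shows "pabs_rat p (x + y) \<le> max (pabs_rat p x) (pabs_rat p y)"
proof (cases "x = 0 \<or> y = 0 \<or> x + y = 0")
  case True
  then show ?thesis using pabs_rat_nonneg[of p] by (auto simp: le_max_iff_disj)
next
  case False
  then obtain r s r' s' where rs: "r \<noteq> 0" "s \<noteq> 0" "x = of_int r / of_int s"
    and rs': "r' \<noteq> 0" "s' \<noteq> 0" "y = of_int r' / of_int s'"
    by (metis rat_nonzero_cases)
  let ?v = "\<lambda>a. int (multiplicity (int p) a)"
  have x: "x = of_int (r * s') / of_int (s * s')" and y: "y = of_int (r' * s) / of_int (s * s')"
    and xy: "x + y = of_int (r * s' + r' * s) / of_int (s * s')"
    using rs rs' by (simp_all add: field_simps)
  have nz: "r * s' + r' * s \<noteq> 0" using False xy by (metis div_0 of_int_0)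
  have "pval_rat p x = ?v (r * s') - ?v (s * s')"
    using pval_rat_of_int_divide[OF assms, of "r * s'" "s * s'"] x rs rs' by simp
  moreover have "pval_rat p y = ?v (r' * s) - ?v (s * s')"
    using pval_rat_of_int_divide[OF assms, of "r' * s" "s * s'"] y rs rs' by simp
  moreover have "pval_rat p (x + y) = ?v (r * s' + r' * s) - ?v (s * s')"
    using pval_rat_of_int_divide[OF assms, of "r * s' + r' * s" "s * s'"] xy rs rs' nz by simp
  moreover have "\<not> is_unit (int p)" using prime_gt_1_nat[OF assms] by simp
  ultimately have "min (pval_rat p x) (pval_rat p y) \<le> pval_rat p (x + y)"
    using multiplicity_add_ge_min[OF _ nz] by fastforce
  moreover have "real p \<ge> 1" using assms prime_ge_1_nat by auto
  ultimately have "real p powr - pval_rat p (x + y) \<le>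
                   max (real p powr - pval_rat p x) (real p powr - pval_rat p y)"
    by (smt (verit) powr_mono of_int_le_iff)
  then show ?thesis using False unfolding pabs_rat_def by simp
qed

lemma pabs_rat_diff_le_max:
  "prime p \<Longrightarrow> pabs_rat p (x - y) \<le> max (pabs_rat p x) (pabs_rat p y)"
  using pabs_rat_add_le_max[of p x "- y"] pabs_rat_minus[of p y] by simp

lemma pabs_rat_triangle: "prime p \<Longrightarrow> pabs_rat p (x + y) \<le> pabs_rat p x + pabs_rat p y"
  using pabs_rat_add_le_max[of p x y] pabs_rat_nonneg[of p] by (smt (verit))

lemma pabs_rat_minus_commute: "prime p \<Longrightarrow> pabs_rat p (x - y) = pabs_rat p (y - x)"
  using pabs_rat_minus[of p "x - y"] by simp

lemma pabs_rat_diff_triangle: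
  "prime p \<Longrightarrow> pabs_rat p (x - z) \<le> pabs_rat p (x - y) + pabs_rat p (y - z)"
  using pabs_rat_triangle[of p "x - y" "y - z"] by simp

lemma pabs_rat_abs_diff_le: "prime p \<Longrightarrow> \<bar>pabs_rat p x - pabs_rat p y\<bar> \<le> pabs_rat p (x - y)"
  using pabs_rat_triangle[of p "x - y" y] pabs_rat_triangle[of p "y - x" x]
    pabs_rat_minus_commute[of p x y] by auto

lemma pabs_rat_add_diff_le:
  "prime p \<Longrightarrow> pabs_rat p ((a + b) - (c + d)) \<le> pabs_rat p (a - c) + pabs_rat p (b - d)"
  using pabs_rat_triangle[of p "a - c" "b - d"] by (simp add: algebra_simps)

lemma pabs_rat_diff_diff_le:
  "prime p \<Longrightarrow> pabs_rat p ((a - b) - (c - d)) \<le> pabs_rat p (a - c) + pabs_rat p (b - d)"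
  using pabs_rat_triangle[of p "a - c" "d - b"] pabs_rat_minus_commute[of p d b]
  by (simp add: algebra_simps)

lemma pabs_rat_mult_diff_le:
  assumes "prime p" "pabs_rat p a \<le> B" "pabs_rat p d \<le> B"
  shows "pabs_rat p (a * b - c * d) \<le> B * pabs_rat p (a - c) + B * pabs_rat p (b - d)"
proof -
  have "B \<ge> 0" using assms(2) pabs_rat_nonneg[of p a] by linarith
  have "a * b - c * d = a * (b - d) + (a - c) * d" by (simp add: algebra_simps)
  then have "pabs_rat p (a * b - c * d) \<le>
             pabs_rat p a * pabs_rat p (b - d) + pabs_rat p (a - c) * pabs_rat p d"
    using pabs_rat_triangle[OF assms(1)] pabs_rat_mult[OF assms(1)] by metis
  also have "\<dots> \<le> B * pabs_rat p (b - d) + pabs_rat p (a - c) * B"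
    using assms \<open>B \<ge> 0\<close> pabs_rat_nonneg by (intro add_mono mult_mono) auto
  finally show ?thesis by (simp add: algebra_simps)
qed

lemma pabs_rat_1: "prime p \<Longrightarrow> pabs_rat p 1 = 1"
  unfolding pabs_rat_def pval_rat_def by simp

lemma pabs_rat_p_power:
  assumes "prime p"
  shows "pabs_rat p (of_nat p ^ n) = inverse (real p ^ n)"
proof -
  have "(of_nat p ^ n :: rat) = of_int (int p ^ n) / of_int 1" by simp
  then have "pval_rat p (of_nat p ^ n) = int n"
    using pval_rat_of_int_divide[OF assms, of "int p ^ n" 1] multiplicity_same_power[of "int p" n]
      prime_gt_1_nat[OF assms] by simp
  moreover have "p > 0" using assms prime_gt_0_nat by auto
  ultimately show ?thesis unfolding pabs_rat_def by (simp add: powr_minus powr_realpow)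
qed

lemma pabs_rat_inverse_p_power:
  assumes "prime p"
  shows "pabs_rat p (inverse (of_nat p ^ n)) = real p ^ n"
proof -
  have "p > 0" using assms prime_gt_0_nat by auto
  then have "pabs_rat p (of_nat p ^ n) * pabs_rat p (inverse (of_nat p ^ n)) = 1"
    using pabs_rat_mult[OF assms, symmetric] pabs_rat_1[OF assms] by simp
  then show ?thesis using pabs_rat_p_power[OF assms] \<open>p > 0\<close> by (simp add: field_simps)
qed

section \<open>Cauchy sequences and their equivalence\<close>

lemma padic_cauchy_bounded:
  assumes "prime p" "padic_cauchy p f"
  obtains B where "B \<ge> 0" "\<And>n. pabs_rat p (f n) \<le> B"
proof -
  obtain N where N: "\<forall>m\<ge>N. \<forall>n\<ge>N. pabs_rat p (f m - f n) < 1"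
    using assms(2) unfolding padic_cauchy_def by (meson zero_less_one)
  define M where "M = Max ((\<lambda>n. pabs_rat p (f n)) ` {..N})"
  have M: "n \<le> N \<Longrightarrow> pabs_rat p (f n) \<le> M" for n unfolding M_def by (intro Max_ge) auto
  have "pabs_rat p (f n) \<le> M + 1" for n
  proof (cases "n \<le> N")
    case False
    have "pabs_rat p (f n) \<le> pabs_rat p (f n - f N) + pabs_rat p (f N)"
      using pabs_rat_triangle[OF assms(1), of "f n - f N" "f N"] by simp
    also have "\<dots> \<le> 1 + M" using N[rule_format, of n N] False M[of N] by simp
    finally show ?thesis by simp
  qed (use M in fastforce)
  moreover have "M + 1 \<ge> 0" using M[of 0] pabs_rat_nonneg[of p "f 0"] by simp
  ultimately show ?thesis using that by blast
qed

lemma padic_cauchy_dominated: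
  assumes "padic_cauchy p f" "padic_cauchy p g" "C \<ge> 0"
    and "\<And>m n. pabs_rat p (h m - h n) \<le> C * pabs_rat p (f m - f n) + C * pabs_rat p (g m - g n)"
  shows "padic_cauchy p h"
  unfolding padic_cauchy_def
proof (intro allI impI)
  fix e :: real
  assume "e > 0"
  define e' where "e' = e / (2 * C + 1)"
  have "C * e' + C * e' + e' = (2 * C + 1) * e'" by (simp add: algebra_simps)
  also have "\<dots> = e" unfolding e'_def using assms(3) by simp
  finally have "C * e' + C * e' + e' = e" .
  moreover have "e' > 0" using \<open>e > 0\<close> assms(3) by (simp add: e'_def)
  ultimately have e': "e' > 0" "C * e' + C * e' < e" by linarith+
  obtain N1 where N1: "\<forall>m\<ge>N1. \<forall>n\<ge>N1. pabs_rat p (f m - f n) < e'"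
    using assms(1) e' unfolding padic_cauchy_def by blast
  obtain N2 where N2: "\<forall>m\<ge>N2. \<forall>n\<ge>N2. pabs_rat p (g m - g n) < e'"
    using assms(2) e' unfolding padic_cauchy_def by blast
  have "pabs_rat p (h m - h n) < e" if "m \<ge> max N1 N2" "n \<ge> max N1 N2" for m n
  proof -
    have "pabs_rat p (f m - f n) \<le> e'" "pabs_rat p (g m - g n) \<le> e'"
      using N1 N2 that by (auto simp: less_imp_le)
    then have "C * pabs_rat p (f m - f n) \<le> C * e'" "C * pabs_rat p (g m - g n) \<le> C * e'"
      using assms(3) by (simp_all add: mult_left_mono)
    then show ?thesis using assms(4)[of m n] e' by linarith
  qed
  then show "\<exists>N. \<forall>m\<ge>N. \<forall>n\<ge>N. pabs_rat p (h m - h n) < e" by blast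
qed

lemma padic_equiv_dominated:
  assumes "padic_equiv p f f'" "padic_equiv p g g'" "C \<ge> 0"
    and "\<And>n. pabs_rat p (h n - h' n) \<le> C * pabs_rat p (f n - f' n) + C * pabs_rat p (g n - g' n)"
  shows "padic_equiv p h h'"
  unfolding padic_equiv_def
proof (rule Lim_null_comparison)
  show "\<forall>\<^sub>F n in sequentially. norm (pabs_rat p (h n - h' n)) \<le>
          C * pabs_rat p (f n - f' n) + C * pabs_rat p (g n - g' n)"
    using assms(4) pabs_rat_nonneg by simp
  have "(\<lambda>n. C * pabs_rat p (f n - f' n) + C * pabs_rat p (g n - g' n)) \<longlonglongrightarrow> C * 0 + C * 0"
    using assms(1,2) unfolding padic_equiv_def by (intro tendsto_intros)
  then show "(\<lambda>n. C * pabs_rat p (f n - f' n) + C * pabs_rat p (g n - g' n)) \<longlonglongrightarrow> 0"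
    by simp
qed

lemma padic_equiv_sym: "prime p \<Longrightarrow> padic_equiv p f g \<Longrightarrow> padic_equiv p g f"
  unfolding padic_equiv_def using pabs_rat_minus_commute[of p] by simp

lemma padic_equiv_trans:
  assumes "prime p" "padic_equiv p f g" "padic_equiv p g h"
  shows "padic_equiv p f h"
proof (rule padic_equiv_dominated[OF assms(2,3) zero_le_one])
  show "pabs_rat p (f n - h n) \<le> 1 * pabs_rat p (f n - g n) + 1 * pabs_rat p (g n - h n)" for n
    using pabs_rat_diff_triangle[OF assms(1), of "f n" "h n" "g n"] by simp
qed

lemma padic_cauchy_const: "padic_cauchy p (\<lambda>n. c)"
  unfolding padic_cauchy_def by auto

lemma padic_cauchy_add:
  assumes "prime p" "padic_cauchy p f" "padic_cauchy p g"
  shows "padic_cauchy p (\<lambda>n. f n + g n)"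
  using assms(2,3) zero_le_one by (rule padic_cauchy_dominated)
    (rule order.trans[OF pabs_rat_add_diff_le[OF assms(1)]], simp)

lemma padic_cauchy_diff:
  assumes "prime p" "padic_cauchy p f" "padic_cauchy p g"
  shows "padic_cauchy p (\<lambda>n. f n - g n)"
  using assms(2,3) zero_le_one by (rule padic_cauchy_dominated)
    (rule order.trans[OF pabs_rat_diff_diff_le[OF assms(1)]], simp)

lemma padic_cauchy_mult:
  assumes "prime p" "padic_cauchy p f" "padic_cauchy p g"
  shows "padic_cauchy p (\<lambda>n. f n * g n)"
proof -
  obtain B1 B2 where "B1 \<ge> 0" "\<And>n. pabs_rat p (f n) \<le> B1" "\<And>n. pabs_rat p (g n) \<le> B2"
    using padic_cauchy_bounded assms by metis
  then have "max B1 B2 \<ge> 0"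
    and "pabs_rat p (f m * g m - f n * g n) \<le>
         max B1 B2 * pabs_rat p (f m - f n) + max B1 B2 * pabs_rat p (g m - g n)" for m n
    by (auto simp: le_max_iff_disj intro!: pabs_rat_mult_diff_le[OF assms(1)])
  with assms(2,3) show ?thesis by (rule padic_cauchy_dominated)
qed

lemma padic_equiv_add:
  assumes "prime p" "padic_equiv p f f'" "padic_equiv p g g'"
  shows "padic_equiv p (\<lambda>n. f n + g n) (\<lambda>n. f' n + g' n)"
  using assms(2,3) zero_le_one by (rule padic_equiv_dominated)
    (rule order.trans[OF pabs_rat_add_diff_le[OF assms(1)]], simp)

lemma padic_equiv_diff:
  assumes "prime p" "padic_equiv p f f'" "padic_equiv p g g'"
  shows "padic_equiv p (\<lambda>n. f n - g n) (\<lambda>n. f' n - g' n)"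
  using assms(2,3) zero_le_one by (rule padic_equiv_dominated)
    (rule order.trans[OF pabs_rat_diff_diff_le[OF assms(1)]], simp)

lemma padic_equiv_mult:
  assumes "prime p" "padic_cauchy p f" "padic_cauchy p g'"
    and "padic_equiv p f f'" "padic_equiv p g g'"
  shows "padic_equiv p (\<lambda>n. f n * g n) (\<lambda>n. f' n * g' n)"
proof -
  obtain B1 B2 where "B1 \<ge> 0" "\<And>n. pabs_rat p (f n) \<le> B1" "\<And>n. pabs_rat p (g' n) \<le> B2"
    using padic_cauchy_bounded assms(1-3) by metis
  then have "max B1 B2 \<ge> 0"
    and "pabs_rat p (f n * g n - f' n * g' n) \<le>
         max B1 B2 * pabs_rat p (f n - f' n) + max B1 B2 * pabs_rat p (g n - g' n)" for n
    by (auto simp: le_max_iff_disj intro!: pabs_rat_mult_diff_le[OF assms(1)])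
  with assms(4,5) show ?thesis by (rule padic_equiv_dominated)
qed

section \<open>Arithmetic in Q_p\<close>

lemma qp_cls_self: "padic_cauchy p f \<Longrightarrow> f \<in> qp_cls p f"
  unfolding qp_cls_def padic_equiv_def by simp

lemma qp_cls_in_Qp: "padic_cauchy p f \<Longrightarrow> qp_cls p f \<in> Qp p"
  unfolding Qp_def by blast

lemma Qp_cases:
  assumes "x \<in> Qp p"
  obtains f where "padic_cauchy p f" "x = qp_cls p f"
  using assms unfolding Qp_def by blast

lemma qp_rep_cls:
  assumes "padic_cauchy p f"
  shows "padic_cauchy p (qp_rep (qp_cls p f))" "padic_equiv p f (qp_rep (qp_cls p f))"
proof -
  have "qp_rep (qp_cls p f) \<in> qp_cls p f"
    unfolding qp_rep_def by (rule someI[of "\<lambda>g. g \<in> qp_cls p f", OF qp_cls_self[OF assms]])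
  then show "padic_cauchy p (qp_rep (qp_cls p f))" "padic_equiv p f (qp_rep (qp_cls p f))"
    unfolding qp_cls_def by simp_all
qed

lemma qp_cls_eq: "prime p \<Longrightarrow> padic_equiv p f g \<Longrightarrow> qp_cls p f = qp_cls p g"
  unfolding qp_cls_def using padic_equiv_trans padic_equiv_sym by blast

lemma qp_cls_binop_rep:
  assumes "prime p" "padic_cauchy p f" "padic_cauchy p g"
    and "\<And>f' g'. padic_cauchy p f' \<Longrightarrow> padic_equiv p f' f \<Longrightarrow> padic_equiv p g' g \<Longrightarrow>
           padic_equiv p (\<lambda>n. h (f' n) (g' n)) (\<lambda>n. h (f n) (g n))"
  shows "qp_cls p (\<lambda>n. h (qp_rep (qp_cls p f) n) (qp_rep (qp_cls p g) n)) =
         qp_cls p (\<lambda>n. h (f n) (g n))"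
proof -
  have "padic_equiv p (\<lambda>n. h (qp_rep (qp_cls p f) n) (qp_rep (qp_cls p g) n)) (\<lambda>n. h (f n) (g n))"
    using assms(4) qp_rep_cls[OF assms(2)] qp_rep_cls[OF assms(3)] padic_equiv_sym[OF assms(1)]
    by blast
  then show ?thesis by (rule qp_cls_eq[OF assms(1)])
qed

lemma qp_add_cls:
  "prime p \<Longrightarrow> padic_cauchy p f \<Longrightarrow> padic_cauchy p g \<Longrightarrow>
     qp_add p (qp_cls p f) (qp_cls p g) = qp_cls p (\<lambda>n. f n + g n)"
  unfolding qp_add_def by (rule qp_cls_binop_rep) (simp_all add: padic_equiv_add)

lemma qp_minus_cls:
  "prime p \<Longrightarrow> padic_cauchy p f \<Longrightarrow> padic_cauchy p g \<Longrightarrow>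
     qp_minus p (qp_cls p f) (qp_cls p g) = qp_cls p (\<lambda>n. f n - g n)"
  unfolding qp_minus_def by (rule qp_cls_binop_rep) (simp_all add: padic_equiv_diff)

lemma qp_mult_cls:
  "prime p \<Longrightarrow> padic_cauchy p f \<Longrightarrow> padic_cauchy p g \<Longrightarrow>
     qp_mult p (qp_cls p f) (qp_cls p g) = qp_cls p (\<lambda>n. f n * g n)"
  unfolding qp_mult_def by (rule qp_cls_binop_rep) (simp_all add: padic_equiv_mult)

lemma tendsto_qp_abs_cls:
  assumes "prime p" "padic_cauchy p f"
  shows "(\<lambda>n. pabs_rat p (f n)) \<longlonglongrightarrow> qp_abs p (qp_cls p f)"
proof -
  define r where "r = qp_rep (qp_cls p f)"
  have r: "padic_cauchy p r" "padic_equiv p f r" using qp_rep_cls[OF assms(2)] by (simp_all add: r_def)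
  have "Cauchy (\<lambda>n. pabs_rat p (r n))"
  proof (rule CauchyI)
    fix e :: real
    assume "e > 0"
    then obtain M where "\<forall>m\<ge>M. \<forall>n\<ge>M. pabs_rat p (r m - r n) < e"
      using r(1) unfolding padic_cauchy_def by blast
    then show "\<exists>M. \<forall>m\<ge>M. \<forall>n\<ge>M. norm (pabs_rat p (r m) - pabs_rat p (r n)) < e"
      using pabs_rat_abs_diff_le[OF assms(1)] by (metis order.strict_trans1 real_norm_def)
  qed
  then have lim: "(\<lambda>n. pabs_rat p (r n)) \<longlonglongrightarrow> qp_abs p (qp_cls p f)"
    unfolding qp_abs_def r_def[symmetric] by (simp add: Cauchy_convergent_iff convergent_LIMSEQ_iff)
  have "(\<lambda>n. pabs_rat p (f n) - pabs_rat p (r n)) \<longlonglongrightarrow> 0"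
  proof (rule Lim_null_comparison)
    show "\<forall>\<^sub>F n in sequentially. norm (pabs_rat p (f n) - pabs_rat p (r n)) \<le> pabs_rat p (f n - r n)"
      using pabs_rat_abs_diff_le[OF assms(1)] by simp
    show "(\<lambda>n. pabs_rat p (f n - r n)) \<longlonglongrightarrow> 0" using r(2) unfolding padic_equiv_def .
  qed
  then show ?thesis using Lim_transform[OF lim] by simp
qed

definition qp_of_rat :: "nat \<Rightarrow> rat \<Rightarrow> qp" where
  "qp_of_rat p c = qp_cls p (\<lambda>n. c)"

lemma qp_of_rat_in_Qp: "qp_of_rat p c \<in> Qp p"
  unfolding qp_of_rat_def by (rule qp_cls_in_Qp[OF padic_cauchy_const])

lemma qp_abs_of_rat: "prime p \<Longrightarrow> qp_abs p (qp_of_rat p c) = pabs_rat p c"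
  unfolding qp_of_rat_def
  using tendsto_qp_abs_cls[OF _ padic_cauchy_const, of p c] LIMSEQ_unique[OF _ tendsto_const] by blast

lemma qp_minus_in_Qp:
  assumes "prime p" "x \<in> Qp p" "y \<in> Qp p"
  shows "qp_minus p x y \<in> Qp p"
  using assms(2,3) by (elim Qp_cases) (simp add: qp_minus_cls assms(1) padic_cauchy_diff qp_cls_in_Qp)

lemma qp_mult_in_Qp:
  assumes "prime p" "x \<in> Qp p" "y \<in> Qp p"
  shows "qp_mult p x y \<in> Qp p"
  using assms(2,3) by (elim Qp_cases) (simp add: qp_mult_cls assms(1) padic_cauchy_mult qp_cls_in_Qp)

lemma qp_abs_mult:
  assumes "prime p" "x \<in> Qp p" "y \<in> Qp p"
  shows "qp_abs p (qp_mult p x y) = qp_abs p x * qp_abs p y"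
proof -
  obtain f where f: "padic_cauchy p f" "x = qp_cls p f" using Qp_cases[OF assms(2)] .
  obtain g where g: "padic_cauchy p g" "y = qp_cls p g" using Qp_cases[OF assms(3)] .
  have "(\<lambda>n. pabs_rat p (f n * g n)) \<longlonglongrightarrow> qp_abs p (qp_mult p x y)"
    using tendsto_qp_abs_cls[OF assms(1) padic_cauchy_mult[OF assms(1) f(1) g(1)]]
    by (simp add: f g qp_mult_cls assms(1))
  moreover have "(\<lambda>n. pabs_rat p (f n * g n)) \<longlonglongrightarrow> qp_abs p x * qp_abs p y"
    unfolding pabs_rat_mult[OF assms(1)] f(2) g(2)
    by (intro tendsto_mult tendsto_qp_abs_cls assms(1) f(1) g(1))
  ultimately show ?thesis by (rule LIMSEQ_unique)
qed

lemma qp_abs_binop_le_max: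
  assumes "prime p" "x \<in> Qp p" "y \<in> Qp p"
    and "\<And>f g. padic_cauchy p f \<Longrightarrow> padic_cauchy p g \<Longrightarrow>
           padic_cauchy p (\<lambda>n. h (f n) (g n)) \<and>
           qp_op (qp_cls p f) (qp_cls p g) = qp_cls p (\<lambda>n. h (f n) (g n))"
    and "\<And>a b. pabs_rat p (h a b) \<le> max (pabs_rat p a) (pabs_rat p b)"
  shows "qp_abs p (qp_op x y) \<le> max (qp_abs p x) (qp_abs p y)"
proof -
  obtain f where f: "padic_cauchy p f" "x = qp_cls p f" using Qp_cases[OF assms(2)] .
  obtain g where g: "padic_cauchy p g" "y = qp_cls p g" using Qp_cases[OF assms(3)] .
  have "(\<lambda>n. max (pabs_rat p (f n)) (pabs_rat p (g n))) \<longlonglongrightarrow> max (qp_abs p x) (qp_abs p y)"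
    unfolding f(2) g(2) by (intro tendsto_max tendsto_qp_abs_cls assms(1) f(1) g(1))
  moreover have "(\<lambda>n. pabs_rat p (h (f n) (g n))) \<longlonglongrightarrow> qp_abs p (qp_op x y)"
    using assms(4)[OF f(1) g(1)] tendsto_qp_abs_cls[OF assms(1)] by (simp add: f(2) g(2))
  ultimately show ?thesis by (intro LIMSEQ_le) (auto simp: assms(5))
qed

lemma qp_abs_add_le_max:
  "prime p \<Longrightarrow> x \<in> Qp p \<Longrightarrow> y \<in> Qp p \<Longrightarrow>
     qp_abs p (qp_add p x y) \<le> max (qp_abs p x) (qp_abs p y)"
  by (rule qp_abs_binop_le_max[where h = "(+)"])
    (simp_all add: padic_cauchy_add qp_add_cls pabs_rat_add_le_max)

lemma qp_abs_minus_le_max: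
  "prime p \<Longrightarrow> x \<in> Qp p \<Longrightarrow> y \<in> Qp p \<Longrightarrow>
     qp_abs p (qp_minus p x y) \<le> max (qp_abs p x) (qp_abs p y)"
  by (rule qp_abs_binop_le_max[where h = "(-)"])
    (simp_all add: padic_cauchy_diff qp_minus_cls pabs_rat_diff_le_max)

lemma qp_add_minus_cancel:
  assumes "prime p" "x \<in> Qp p" "y \<in> Qp p"
  shows "qp_add p x (qp_minus p y x) = y"
  using assms(2,3)
  by (elim Qp_cases) (simp add: assms(1) qp_minus_cls qp_add_cls padic_cauchy_diff)

lemma qp_minus_add_cancel:
  assumes "prime p" "x \<in> Qp p" "y \<in> Qp p"
  shows "qp_minus p (qp_add p x y) x = y"
  using assms(2,3)
  by (elim Qp_cases) (simp add: assms(1) qp_minus_cls qp_add_cls padic_cauchy_add)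

lemma qp_minus_zero:
  assumes "prime p" "y \<in> Qp p"
  shows "qp_minus p y (qp_of_rat p 0) = y"
  using assms(2)
  by (elim Qp_cases) (simp add: assms(1) qp_of_rat_def qp_minus_cls padic_cauchy_const)

lemma qp_mult_zero_left:
  assumes "prime p" "y \<in> Qp p"
  shows "qp_mult p (qp_of_rat p 0) y = qp_of_rat p 0"
  using assms(2)
  by (elim Qp_cases) (simp add: assms(1) qp_of_rat_def qp_mult_cls padic_cauchy_const)

lemma qp_mult_of_rat_inverse:
  assumes "prime p" "y \<in> Qp p" "a \<noteq> 0"
  shows "qp_mult p (qp_of_rat p a) (qp_mult p (qp_of_rat p (inverse a)) y) = y"
  using assms(2)
  by (elim Qp_cases)
    (simp add: assms qp_of_rat_def qp_mult_cls padic_cauchy_const padic_cauchy_mult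
      mult.assoc[symmetric])

section \<open>The topology of Q_p\<close>

lemma istopology_qp_open: "istopology (qp_open p)"
  unfolding istopology_def
proof (intro conjI allI impI)
  fix S T
  assume S: "qp_open p S" and T: "qp_open p T"
  show "qp_open p (S \<inter> T)" unfolding qp_open_def
  proof (intro conjI ballI)
    show "S \<inter> T \<subseteq> Qp p" using S unfolding qp_open_def by auto
    fix x
    assume x: "x \<in> S \<inter> T"
    obtain e1 where "e1 > 0" "\<forall>y\<in>Qp p. qp_abs p (qp_minus p y x) < e1 \<longrightarrow> y \<in> S"
      using S x unfolding qp_open_def by blast
    moreover obtain e2 where "e2 > 0" "\<forall>y\<in>Qp p. qp_abs p (qp_minus p y x) < e2 \<longrightarrow> y \<in> T"
      using T x unfolding qp_open_def by blast
    ultimately show "\<exists>e>0. \<forall>y\<in>Qp p. qp_abs p (qp_minus p y x) < e \<longrightarrow> y \<in> S \<inter> T"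
      by (intro exI[of _ "min e1 e2"]) auto
  qed
next
  fix K
  assume K: "\<forall>S\<in>K. qp_open p S"
  show "qp_open p (\<Union>K)" unfolding qp_open_def
  proof (intro conjI ballI)
    show "\<Union>K \<subseteq> Qp p" using K unfolding qp_open_def by auto
    fix x
    assume "x \<in> \<Union>K"
    then obtain S where S: "S \<in> K" "x \<in> S" by blast
    then obtain e where "e > 0" "\<forall>y\<in>Qp p. qp_abs p (qp_minus p y x) < e \<longrightarrow> y \<in> S"
      using K unfolding qp_open_def by blast
    then show "\<exists>e>0. \<forall>y\<in>Qp p. qp_abs p (qp_minus p y x) < e \<longrightarrow> y \<in> \<Union>K"
      using S by blast
  qed
qed

lemma openin_qp_topology: "openin (qp_topology p) = qp_open p"
  unfolding qp_topology_def using istopology_qp_open by simp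

lemma topspace_qp_topology: "topspace (qp_topology p) = Qp p"
proof -
  have "qp_open p (Qp p)" unfolding qp_open_def by (auto intro: exI[of _ 1])
  then show ?thesis unfolding topspace_def openin_qp_topology qp_open_def by auto
qed

lemma Zp_subset_Qp: "Zp p \<subseteq> Qp p"
  unfolding Zp_def by auto

lemma topspace_subtopology_Zp: "topspace (subtopology (qp_topology p) (Zp p)) = Zp p"
  using Zp_subset_Qp topspace_qp_topology by auto

text \<open>By the ultrametric inequality, the closed unit ball Z_p is also open.\<close>

lemma qp_open_Zp:
  assumes "prime p"
  shows "qp_open p (Zp p)"
  unfolding qp_open_def
proof (intro conjI ballI)
  fix x
  assume "x \<in> Zp p"
  then have x: "x \<in> Qp p" "qp_abs p x \<le> 1" unfolding Zp_def by auto
  have "qp_abs p y \<le> 1" if y: "y \<in> Qp p" "qp_abs p (qp_minus p y x) < 1" for y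
  proof -
    have "qp_abs p y = qp_abs p (qp_add p x (qp_minus p y x))"
      using qp_add_minus_cancel[OF assms x(1) y(1)] by simp
    also have "\<dots> \<le> max (qp_abs p x) (qp_abs p (qp_minus p y x))"
      by (rule qp_abs_add_le_max[OF assms x(1) qp_minus_in_Qp[OF assms y(1) x(1)]])
    finally show ?thesis using x y by simp
  qed
  then show "\<exists>e>0. \<forall>y\<in>Qp p. qp_abs p (qp_minus p y x) < e \<longrightarrow> y \<in> Zp p"
    unfolding Zp_def by (intro exI[of _ 1]) auto
qed (rule Zp_subset_Qp)

lemma openin_Zp_contains_ball:
  assumes "openin (subtopology (qp_topology p) (Zp p)) W" "x \<in> W"
  obtains e where "e > 0" "\<And>y. y \<in> Zp p \<Longrightarrow> qp_abs p (qp_minus p y x) < e \<Longrightarrow> y \<in> W"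
proof -
  obtain V where V: "qp_open p V" "W = V \<inter> Zp p"
    using assms(1) unfolding openin_subtopology openin_qp_topology by blast
  moreover have "x \<in> V" using assms(2) V(2) by blast
  ultimately obtain e where e: "e > 0" "\<forall>y\<in>Qp p. qp_abs p (qp_minus p y x) < e \<longrightarrow> y \<in> V"
    unfolding qp_open_def by blast
  show ?thesis
  proof (rule that[OF e(1)])
    fix y
    assume "y \<in> Zp p" "qp_abs p (qp_minus p y x) < e"
    then show "y \<in> W" using e(2) V(2) Zp_subset_Qp by blast
  qed
qed

section \<open>The space Q_p(X)\<close>

lemma QpX_in_Qp: "\<xi> \<in> QpX p \<Longrightarrow> \<xi> i \<in> Qp p"
  unfolding QpX_def by blast

lemma Zp_valued_in_QpX:
  assumes "\<And>i. \<xi> i \<in> Zp p"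
  shows "\<xi> \<in> QpX p"
proof -
  have "{i. qp_abs p (\<xi> i) > 1} = {}" using assms by (auto simp: Zp_def not_less)
  then show ?thesis using assms Zp_subset_Qp by (auto simp: QpX_def)
qed

lemma qpX_minus_in_QpX:
  assumes "prime p" "\<xi> \<in> QpX p" "\<eta> \<in> QpX p"
  shows "qpX_minus p \<eta> \<xi> \<in> QpX p"
proof -
  have le: "qp_abs p (qpX_minus p \<eta> \<xi> i) \<le> max (qp_abs p (\<eta> i)) (qp_abs p (\<xi> i))" for i
    unfolding qpX_minus_def
    by (rule qp_abs_minus_le_max[OF assms(1) QpX_in_Qp[OF assms(3)] QpX_in_Qp[OF assms(2)]])
  have "{i. qp_abs p (qpX_minus p \<eta> \<xi> i) > 1} \<subseteq> {i. qp_abs p (\<eta> i) > 1} \<union> {i. qp_abs p (\<xi> i) > 1}"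
  proof
    fix i
    assume "i \<in> {i. qp_abs p (qpX_minus p \<eta> \<xi> i) > 1}"
    then have "1 < max (qp_abs p (\<eta> i)) (qp_abs p (\<xi> i))" using le[of i] by simp
    then show "i \<in> {i. qp_abs p (\<eta> i) > 1} \<union> {i. qp_abs p (\<xi> i) > 1}"
      by (simp add: less_max_iff_disj)
  qed
  moreover have "finite ({i. qp_abs p (\<eta> i) > 1} \<union> {i. qp_abs p (\<xi> i) > 1})"
    using assms(2,3) unfolding QpX_def by simp
  ultimately have "finite {i. qp_abs p (qpX_minus p \<eta> \<xi> i) > 1}" by (rule finite_subset)
  moreover have "qpX_minus p \<eta> \<xi> i \<in> Qp p" for i
    unfolding qpX_minus_def by (rule qp_minus_in_Qp[OF assms(1) QpX_in_Qp[OF assms(3)] QpX_in_Qp[OF assms(2)]])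
  ultimately show ?thesis unfolding QpX_def by blast
qed

lemma bdd_above_qp_abs_QpX:
  assumes "\<xi> \<in> QpX p"
  shows "bdd_above (range (\<lambda>i. qp_abs p (\<xi> i)))"
proof -
  define F where "F = {i. qp_abs p (\<xi> i) > 1}"
  define B where "B = Max (insert 1 ((\<lambda>i. qp_abs p (\<xi> i)) ` F))"
  have "finite F" using assms unfolding QpX_def F_def by blast
  have "qp_abs p (\<xi> i) \<le> B" for i
  proof (cases "i \<in> F")
    case True
    then show ?thesis unfolding B_def using \<open>finite F\<close> by (intro Max_ge) auto
  next
    case False
    then have "qp_abs p (\<xi> i) \<le> 1" unfolding F_def by simp
    also have "1 \<le> B" unfolding B_def using \<open>finite F\<close> by (intro Max_ge) auto
    finally show ?thesis .
  qed
  then show ?thesis by (intro bdd_aboveI2)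
qed

lemma qpX_norm_upper: "\<xi> \<in> QpX p \<Longrightarrow> qp_abs p (\<xi> i) \<le> qpX_norm p \<xi>"
  unfolding qpX_norm_def by (rule cSup_upper) (auto simp: bdd_above_qp_abs_QpX)

lemma qpX_norm_least: "(\<And>i. qp_abs p (\<xi> i) \<le> B) \<Longrightarrow> qpX_norm p \<xi> \<le> B"
  unfolding qpX_norm_def by (rule cSup_least) auto

lemma tau_open_Zp_valued:
  assumes "prime p"
  shows "tau_open p {\<xi> :: 'x \<Rightarrow> qp. \<forall>i. \<xi> i \<in> Zp p}"
  unfolding tau_open_def
proof (intro conjI allI impI)
  fix P :: "'x set"
  assume "finite P"
  let ?X = "\<lambda>i. if i \<in> P then qp_topology p else subtopology (qp_topology p) (Zp p)"
  have "{i. Zp p \<noteq> topspace (?X i)} \<subseteq> P" using topspace_subtopology_Zp by auto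
  then have "finite {i \<in> UNIV. Zp p \<noteq> topspace (?X i)}"
    using \<open>finite P\<close> by (simp add: finite_subset)
  moreover have "openin (?X i) (Zp p)" for i
  proof (cases "i \<in> P")
    case True
    then show ?thesis using qp_open_Zp[OF assms] by (simp add: openin_qp_topology)
  next
    case False
    then show ?thesis
      using openin_topspace[of "subtopology (qp_topology p) (Zp p)", unfolded topspace_subtopology_Zp]
      by simp
  qed
  ultimately have "openin (product_topology ?X UNIV) (Pi\<^sub>E UNIV (\<lambda>i. Zp p))"
    by (simp add: openin_PiE_gen)
  moreover have "{\<xi>. \<forall>i. \<xi> i \<in> Zp p} \<inter> {\<xi>. \<forall>j. j \<notin> P \<longrightarrow> \<xi> j \<in> Zp p} = Pi\<^sub>E UNIV (\<lambda>i. Zp p)"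
    by (auto simp: PiE_iff)
  ultimately show "openin (product_topology ?X UNIV)
                     ({\<xi>. \<forall>i. \<xi> i \<in> Zp p} \<inter> {\<xi>. \<forall>j. j \<notin> P \<longrightarrow> \<xi> j \<in> Zp p})"
    by simp
qed (use Zp_valued_in_QpX in blast)

lemma tau_open_imp_openin_Zp_product:
  assumes "tau_open p U"
  shows "openin (product_topology (\<lambda>i. subtopology (qp_topology p) (Zp p)) UNIV)
           (U \<inter> {\<xi>. \<forall>i. \<xi> i \<in> Zp p})"
proof -
  have "\<forall>P. finite P \<longrightarrow>
          openin (product_topology
                    (\<lambda>i. if i \<in> P then qp_topology p else subtopology (qp_topology p) (Zp p)) UNIV)
                 (U \<inter> {\<xi>. \<forall>j. j \<notin> P \<longrightarrow> \<xi> j \<in> Zp p})"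
    using assms unfolding tau_open_def by (rule conjunct2)
  from this[rule_format, of "{}"] show ?thesis by simp
qed

lemma tau_open_contains_uniform_ball:
  fixes U :: "('x \<Rightarrow> qp) set"
  assumes "tau_open p U" "x \<in> U" "\<forall>i. x i \<in> Zp p"
  obtains \<delta> where "\<delta> > 0"
    "\<And>\<zeta>. \<forall>i. \<zeta> i \<in> Zp p \<Longrightarrow> \<forall>i. qp_abs p (qp_minus p (\<zeta> i) (x i)) < \<delta> \<Longrightarrow> \<zeta> \<in> U"
proof -
  let ?Z = "subtopology (qp_topology p) (Zp p)"
  have "x \<in> U \<inter> {\<xi>. \<forall>i. \<xi> i \<in> Zp p}" using assms(2,3) by blast
  then have "\<exists>W. finite {i \<in> UNIV. W i \<noteq> topspace ?Z} \<and> (\<forall>i\<in>UNIV. openin ?Z (W i)) \<and>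
               x \<in> Pi\<^sub>E UNIV W \<and> Pi\<^sub>E UNIV W \<subseteq> U \<inter> {\<xi>. \<forall>i. \<xi> i \<in> Zp p}"
    by (rule bspec[OF tau_open_imp_openin_Zp_product[OF assms(1), unfolded openin_product_topology_alt]])
  then obtain W where W: "finite {i. W i \<noteq> Zp p}" "\<And>i. openin ?Z (W i)"
    "x \<in> Pi\<^sub>E UNIV W" "Pi\<^sub>E UNIV W \<subseteq> U"
    unfolding topspace_subtopology_Zp by auto
  have "x i \<in> W i" for i using W(3) by (simp add: PiE_iff)
  then have "\<exists>e. e > 0 \<and> (\<forall>y. y \<in> Zp p \<longrightarrow> qp_abs p (qp_minus p y (x i)) < e \<longrightarrow> y \<in> W i)" for i
    by (rule openin_Zp_contains_ball[OF W(2)]) blast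
  then obtain E where E: "\<forall>i. E i > 0 \<and>
      (\<forall>y. y \<in> Zp p \<longrightarrow> qp_abs p (qp_minus p y (x i)) < E i \<longrightarrow> y \<in> W i)"
    using choice[of "\<lambda>i e. e > 0 \<and> (\<forall>y. y \<in> Zp p \<longrightarrow> qp_abs p (qp_minus p y (x i)) < e \<longrightarrow> y \<in> W i)"]
    by blast
  define \<delta> where "\<delta> = Min (insert 1 (E ` {i. W i \<noteq> Zp p}))"
  have "\<delta> > 0" using W(1) E by (simp add: \<delta>_def)
  moreover have "\<zeta> \<in> U"
    if \<zeta>: "\<forall>i. \<zeta> i \<in> Zp p" "\<forall>i. qp_abs p (qp_minus p (\<zeta> i) (x i)) < \<delta>" for \<zeta>
  proof -
    have "\<zeta> i \<in> W i" for i
    proof (cases "W i = Zp p")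
      case False
      then have "\<delta> \<le> E i" using W(1) by (simp add: \<delta>_def)
      then show ?thesis using E \<zeta> by (meson order_less_le_trans)
    qed (use \<zeta> in auto)
    then show ?thesis using W(4) by (auto simp: PiE_iff)
  qed
  ultimately show ?thesis using that by blast
qed

section \<open>Z_p-linear maps\<close>

lemma Zp_linearD:
  assumes "Zp_linear p A"
  shows "\<xi> \<in> QpX p \<Longrightarrow> A \<xi> \<in> QpX p"
    and "\<xi> \<in> QpX p \<Longrightarrow> \<eta> \<in> QpX p \<Longrightarrow> A (qpX_add p \<xi> \<eta>) = qpX_add p (A \<xi>) (A \<eta>)"
    and "c \<in> Zp p \<Longrightarrow> \<xi> \<in> QpX p \<Longrightarrow> A (qpX_smult p c \<xi>) = qpX_smult p c (A \<xi>)"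
  using assms unfolding Zp_linear_def by blast+

lemma qp_of_rat_0_in_Zp: "prime p \<Longrightarrow> qp_of_rat p 0 \<in> Zp p"
  using qp_of_rat_in_Qp qp_abs_of_rat by (simp add: Zp_def)

lemma Zp_linear_zero:
  fixes A :: "('x \<Rightarrow> qp) \<Rightarrow> ('x \<Rightarrow> qp)"
  assumes "prime p" "Zp_linear p A"
  shows "A (\<lambda>i. qp_of_rat p 0) = (\<lambda>i. qp_of_rat p 0)"
proof -
  let ?zero = "qp_of_rat p 0"
  have zero: "(\<lambda>i::'x. ?zero) \<in> QpX p"
    using qp_of_rat_0_in_Zp[OF assms(1)] by (rule Zp_valued_in_QpX)
  have "A (\<lambda>i. ?zero) = A (qpX_smult p ?zero (\<lambda>i. ?zero))"
    using qp_mult_zero_left[OF assms(1) qp_of_rat_in_Qp] by (simp add: qpX_smult_def)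
  also have "\<dots> = qpX_smult p ?zero (A (\<lambda>i. ?zero))"
    using Zp_linearD(3)[OF assms(2) qp_of_rat_0_in_Zp[OF assms(1)] zero] .
  also have "\<dots> = (\<lambda>i. ?zero)"
    using qp_mult_zero_left[OF assms(1)] QpX_in_Qp[OF Zp_linearD(1)[OF assms(2) zero]]
    by (simp add: qpX_smult_def)
  finally show ?thesis .
qed

lemma Zp_linear_diff:
  assumes "prime p" "Zp_linear p A" "\<xi> \<in> QpX p" "\<eta> \<in> QpX p"
  shows "A (qpX_minus p \<eta> \<xi>) = qpX_minus p (A \<eta>) (A \<xi>)"
proof -
  define \<zeta> where "\<zeta> = qpX_minus p \<eta> \<xi>"
  have \<zeta>: "\<zeta> \<in> QpX p" unfolding \<zeta>_def by (rule qpX_minus_in_QpX[OF assms(1,3,4)])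
  have "qpX_add p \<xi> \<zeta> = \<eta>"
    using qp_add_minus_cancel[OF assms(1) QpX_in_Qp[OF assms(3)] QpX_in_Qp[OF assms(4)]]
    by (simp add: qpX_add_def qpX_minus_def \<zeta>_def)
  then have A\<eta>: "A \<eta> = qpX_add p (A \<xi>) (A \<zeta>)"
    using Zp_linearD(2)[OF assms(2,3) \<zeta>] by simp
  have A: "A \<xi> \<in> QpX p" "A \<zeta> \<in> QpX p"
    using Zp_linearD(1)[OF assms(2)] assms(3) \<zeta> by blast+
  have "qpX_minus p (qpX_add p (A \<xi>) (A \<zeta>)) (A \<xi>) = A \<zeta>"
    using qp_minus_add_cancel[OF assms(1) QpX_in_Qp[OF A(1)] QpX_in_Qp[OF A(2)]]
    by (simp add: qpX_add_def qpX_minus_def)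
  then show ?thesis unfolding \<zeta>_def[symmetric] A\<eta> by (rule sym)
qed

lemma Zp_linear_tau_continuous_unit_bound:
  fixes A :: "('x \<Rightarrow> qp) \<Rightarrow> ('x \<Rightarrow> qp)"
  assumes "prime p" "Zp_linear p A" "tau_continuous p A"
  obtains \<delta> where "0 < \<delta>" "\<delta> \<le> 1"
    "\<And>\<zeta> i. \<zeta> \<in> QpX p \<Longrightarrow> \<forall>j. qp_abs p (\<zeta> j) < \<delta> \<Longrightarrow> qp_abs p (A \<zeta> i) \<le> 1"
proof -
  let ?zero = "qp_of_rat p 0"
  define S where "S = {\<xi> \<in> QpX p. A \<xi> \<in> {\<eta>. \<forall>i. \<eta> i \<in> Zp p}}"
  have "tau_open p S"
    using assms(3) tau_open_Zp_valued[OF assms(1)] unfolding tau_continuous_def S_def by blast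
  moreover have "(\<lambda>i. ?zero) \<in> S"
    using qp_of_rat_0_in_Zp[OF assms(1)] Zp_valued_in_QpX Zp_linear_zero[OF assms(1,2)]
    by (simp add: S_def)
  ultimately obtain \<delta> where \<delta>: "\<delta> > 0"
    "\<And>\<zeta> :: 'x \<Rightarrow> qp. \<forall>i. \<zeta> i \<in> Zp p \<Longrightarrow> \<forall>i. qp_abs p (qp_minus p (\<zeta> i) ?zero) < \<delta> \<Longrightarrow> \<zeta> \<in> S"
    using tau_open_contains_uniform_ball qp_of_rat_0_in_Zp[OF assms(1)] by blast
  show ?thesis
  proof (rule that[of "min \<delta> 1"])
    fix \<zeta> :: "'x \<Rightarrow> qp" and i
    assume \<zeta>: "\<zeta> \<in> QpX p" "\<forall>j. qp_abs p (\<zeta> j) < min \<delta> 1"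
    then have "\<forall>j. \<zeta> j \<in> Zp p" unfolding Zp_def by (auto simp: QpX_in_Qp less_imp_le)
    moreover have "\<forall>j. qp_minus p (\<zeta> j) ?zero = \<zeta> j"
      using qp_minus_zero[OF assms(1)] QpX_in_Qp[OF \<zeta>(1)] by blast
    ultimately have "\<zeta> \<in> S" using \<delta>(2) \<zeta>(2) by simp
    then show "qp_abs p (A \<zeta> i) \<le> 1" unfolding S_def Zp_def by auto
  qed (use \<delta> in auto)
qed

text \<open>Only p^n \<in> Z_p may be pulled out of A; p^-n enters only through the argument
  \<zeta>' = p^-n \<zeta>.\<close>

lemma Zp_linear_scaled_unit_bound:
  assumes "prime p" "Zp_linear p A" "\<delta> \<le> 1"
    and unit: "\<And>\<zeta> i. \<zeta> \<in> QpX p \<Longrightarrow> \<forall>j. qp_abs p (\<zeta> j) < \<delta> \<Longrightarrow> qp_abs p (A \<zeta> i) \<le> 1"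
    and \<zeta>: "\<zeta> \<in> QpX p" "\<forall>j. real p ^ n * qp_abs p (\<zeta> j) < \<delta>"
  shows "real p ^ n * qp_abs p (A \<zeta> i) \<le> 1"
proof -
  define s where "s = qp_of_rat p (of_nat p ^ n)"
  define t where "t = qp_of_rat p (inverse (of_nat p ^ n))"
  define \<zeta>' where "\<zeta>' = qpX_smult p t \<zeta>"
  have p: "real p > 0" using assms(1) prime_gt_0_nat by simp
  have s: "s \<in> Qp p" "qp_abs p s = inverse (real p ^ n)"
    using qp_of_rat_in_Qp qp_abs_of_rat[OF assms(1)] pabs_rat_p_power[OF assms(1)]
    by (simp_all add: s_def)
  then have "s \<in> Zp p" using p by (simp add: Zp_def inverse_le_1_iff)
  have t: "t \<in> Qp p" "qp_abs p t = real p ^ n"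
    using qp_of_rat_in_Qp qp_abs_of_rat[OF assms(1)] pabs_rat_inverse_p_power[OF assms(1)]
    by (simp_all add: t_def)
  have \<zeta>': "\<zeta>' j \<in> Qp p" "qp_abs p (\<zeta>' j) < \<delta>" for j
    using qp_mult_in_Qp[OF assms(1) t(1)] qp_abs_mult[OF assms(1) t(1)] QpX_in_Qp[OF \<zeta>(1)] t(2) \<zeta>(2)
    by (simp_all add: \<zeta>'_def qpX_smult_def)
  have "\<zeta>' j \<in> Zp p" for j using \<zeta>'[of j] assms(3) by (simp add: Zp_def)
  then have "\<zeta>' \<in> QpX p" by (rule Zp_valued_in_QpX)
  moreover have "qpX_smult p s \<zeta>' = \<zeta>"
    using qp_mult_of_rat_inverse[OF assms(1) QpX_in_Qp[OF \<zeta>(1)]] p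
    by (simp add: qpX_smult_def \<zeta>'_def s_def t_def)
  ultimately have "A \<zeta> = qpX_smult p s (A \<zeta>')"
    using Zp_linearD(3)[OF assms(2) \<open>s \<in> Zp p\<close>] by metis
  moreover have "A \<zeta>' i \<in> Qp p" using Zp_linearD(1)[OF assms(2) \<open>\<zeta>' \<in> QpX p\<close>] by (rule QpX_in_Qp)
  ultimately have "real p ^ n * qp_abs p (A \<zeta> i) = qp_abs p (A \<zeta>' i)"
    using qp_abs_mult[OF assms(1) s(1)] s(2) p by (simp add: qpX_smult_def)
  also have "\<dots> \<le> 1" using unit \<open>\<zeta>' \<in> QpX p\<close> \<zeta>'(2) by blast
  finally show ?thesis .
qed

lemma Zp_linear_norm_bound:
  assumes "prime p" "Zp_linear p A" "\<delta> \<le> 1"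
    and unit: "\<And>\<zeta> i. \<zeta> \<in> QpX p \<Longrightarrow> \<forall>j. qp_abs p (\<zeta> j) < \<delta> \<Longrightarrow> qp_abs p (A \<zeta> i) \<le> 1"
    and "\<zeta> \<in> QpX p" "qpX_norm p \<zeta> < \<delta> / real p ^ n"
  shows "qpX_norm p (A \<zeta>) \<le> inverse (real p ^ n)"
proof -
  have p: "real p > 0" using assms(1) prime_gt_0_nat by simp
  have "real p ^ n * qp_abs p (\<zeta> j) < \<delta>" for j
    using le_less_trans[OF qpX_norm_upper[OF assms(5)] assms(6)] p
    by (simp add: pos_less_divide_eq mult.commute)
  then have "real p ^ n * qp_abs p (A \<zeta> i) \<le> 1" for i
    using Zp_linear_scaled_unit_bound[OF assms(1-5)] by blast
  then show ?thesis using p by (intro qpX_norm_least) (simp add: field_simps)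
qed

theorem lemma2p15:
  fixes p :: nat and A :: "('x::countable \<Rightarrow> qp) \<Rightarrow> ('x \<Rightarrow> qp)"
  assumes "prime p"
    and "Zp_linear p A"
    and "tau_continuous p A"
  shows "norm_continuous p A"
  unfolding norm_continuous_def
proof (intro ballI allI impI)
  fix \<xi> :: "'x \<Rightarrow> qp" and e :: real
  assume \<xi>: "\<xi> \<in> QpX p" and "e > 0"
  obtain \<delta> where \<delta>: "0 < \<delta>" "\<delta> \<le> 1"
    and unit: "\<And>\<zeta> i. \<zeta> \<in> QpX p \<Longrightarrow> \<forall>j. qp_abs p (\<zeta> j) < \<delta> \<Longrightarrow> qp_abs p (A \<zeta> i) \<le> 1"
    using Zp_linear_tau_continuous_unit_bound[OF assms] by blast
  have p: "real p > 1" using prime_gt_1_nat[OF assms(1)] by simp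
  then have "inverse (real p) < 1" by (simp add: inverse_less_1_iff)
  then obtain n where "inverse (real p) ^ n < e" using real_arch_pow_inv[OF \<open>e > 0\<close>] by blast
  then have n: "inverse (real p ^ n) < e" by (simp add: power_inverse)
  show "\<exists>d>0. \<forall>\<eta>\<in>QpX p. qpX_norm p (qpX_minus p \<eta> \<xi>) < d \<longrightarrow>
                        qpX_norm p (qpX_minus p (A \<eta>) (A \<xi>)) < e"
  proof (intro exI[of _ "\<delta> / real p ^ n"] conjI ballI impI)
    fix \<eta>
    assume \<eta>: "\<eta> \<in> QpX p" and "qpX_norm p (qpX_minus p \<eta> \<xi>) < \<delta> / real p ^ n"
    then have "qpX_norm p (A (qpX_minus p \<eta> \<xi>)) \<le> inverse (real p ^ n)"
      by (intro Zp_linear_norm_bound[OF assms(1,2) \<delta>(2) unit qpX_minus_in_QpX[OF assms(1) \<xi>]])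
    then show "qpX_norm p (qpX_minus p (A \<eta>) (A \<xi>)) < e"
      using n Zp_linear_diff[OF assms(1,2) \<xi> \<eta>] by simp
  qed (use \<delta> p in simp)
qed

end
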